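(* Let $\lambda=(\lambda_1,\dots,\lambda_n)\in\mathbb{R}^n$ with $\lambda_1+\dots+\lambda_n>0$. (i) The following are equivalent: (a) $N(\lambda)=n$; (b) there is no partition $(I_1,I_2)$ of $\{1,\dots,n\}$ into two sets with $s_{I_1}(\lambda)>0$ and $s_{I_2}(\lambda)>0$. (ii) There exists $k\in\mathbb{Z}$ with $\tau^k(\lambda)>0$. Moreover, if there is no partition $(I_1,I_2)$ of $\{1,\dots,n\}$ with $s_{I_1}(\lambda)>0$ and $s_{I_2}(\lambda)>0$, then such an integer $k$ is uniquely determined modulo $n$.
   Context: $s_J(\lambda)=\sum_{i\in J}\lambda_i$. $\delta(\lambda)$ is the minimum of $s_J(\lambda)/|J|$ over subsets $J\subset\{1,\dots,n\}$ with $s_J(\lambda)>0$ (here $\delta(\lambda)>0$ since the total sum is positive), and $N(\lambda)$ is the minimum of $|J|$ over subsets $J$ with $s_J(\lambda)/|J|=\delta(\lambda)$. $\mathfrak{S}_n$ acts on $\mathbb{R}^n$ by $\sigma(\lambda)=(\lambda_{\sigma^{-1}(1)},\dots,\lambda_{\sigma^{-1}(n)})$; $\tau\in\mathfrak{S}_n$ sends $i$ to $i+1$ for $i<n$ and $n$ to $1$. For $\mu\in\mathbb{R}^n$, $\mu>0$ means $\mu_1+\dots+\mu_i>0$ for all $i\in\{1,\dots,n\}$. *)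

theory Defs
  imports Complex_Main
begin

text \<open>Vectors in R^n are functions nat => real, with coordinates indexed by 1..n.\<close>

definition sJ :: "nat set \<Rightarrow> (nat \<Rightarrow> real) \<Rightarrow> real" where
  "sJ J lam = (\<Sum>i\<in>J. lam i)"

definition delta :: "nat \<Rightarrow> (nat \<Rightarrow> real) \<Rightarrow> real" where
  "delta n lam = Min {sJ J lam / real (card J) | J. J \<subseteq> {1..n} \<and> sJ J lam > 0}"

definition Nlam :: "nat \<Rightarrow> (nat \<Rightarrow> real) \<Rightarrow> nat" where
  "Nlam n lam = Min {card J | J. J \<subseteq> {1..n} \<and> sJ J lam / real (card J) = delta n lam}"

definition tau :: "nat \<Rightarrow> nat \<Rightarrow> nat" where
  "tau n i = (if i < n then i + 1 else 1)"

definition tau_inv :: "nat \<Rightarrow> nat \<Rightarrow> nat" where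
  "tau_inv n i = (if 1 < i then i - 1 else n)"

definition tau_zpow :: "nat \<Rightarrow> int \<Rightarrow> nat \<Rightarrow> nat" where
  "tau_zpow n k = (if 0 \<le> k then tau n ^^ nat k else tau_inv n ^^ nat (- k))"

text \<open>Action sigma(lam) = (lam (sigma^-1 1), ..., lam (sigma^-1 n)) for sigma = tau^k,
  i.e. tau^k(lam) = lam o tau^(-k).\<close>
definition tau_act :: "nat \<Rightarrow> int \<Rightarrow> (nat \<Rightarrow> real) \<Rightarrow> (nat \<Rightarrow> real)" where
  "tau_act n k lam = (\<lambda>i. lam (tau_zpow n (- k) i))"

text \<open>mu > 0 : all partial sums mu_1 + ... + mu_i (1 <= i <= n) are positive.\<close>
definition pos_vec :: "nat \<Rightarrow> (nat \<Rightarrow> real) \<Rightarrow> bool" where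
  "pos_vec n mu = (\<forall>i\<in>{1..n}. (\<Sum>j=1..i. mu j) > 0)"

definition has_pos_partition :: "nat \<Rightarrow> (nat \<Rightarrow> real) \<Rightarrow> bool" where
  "has_pos_partition n lam = (\<exists>I1 I2. I1 \<union> I2 = {1..n} \<and> I1 \<inter> I2 = {} \<and>
      sJ I1 lam > 0 \<and> sJ I2 lam > 0)"

end

(*
  (i) N(lam) = n says exactly that no proper subset attains the minimum average delta.
  If (I1, I2) is a positive partition, the total average s/n is the mediant of the averages
  of I1 and I2, so one part has average at most s/n and a proper subset attains delta.
  Conversely, a proper minimiser J has positive sum; if its complement has sum at most 0,
  then s_J >= s and s_J/|J| > s/n >= delta, which is absurd.

  (ii) is the cycle lemma. Let S be the prefix sums of lam repeated periodically, so that
  S(t + n) = S(t) + s; then tau^k(lam) > 0 says S(c + i) > S(c) for 1 <= i <= n, where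
  c = (-k) mod n. The last minimum of S on [0, n) is such a start c, and two starts c < c'
  satisfy S(c) < S(c') < S(c) + s, so {c+1..c'} and its complement form a positive partition.
*)
theory Submission
  imports Defs
begin

lemma cycle_lemma_exists:
  fixes S :: "nat \<Rightarrow> 'a::linordered_ab_group_add"
  assumes n: "0 < n" and period: "\<And>t. S (t + n) = S t + d" and d: "0 < d"
  shows "\<exists>c<n. \<forall>i\<in>{1..n}. S c < S (c + i)"
proof -
  define M where "M = Min (S ` {..<n})"
  have M_le: "M \<le> S j" if "j < n" for j
    using that unfolding M_def by simp
  define c where "c = Max {j. j < n \<and> S j = M}"
  have "M \<in> S ` {..<n}"
    unfolding M_def using n by (intro Min_in) auto
  then have "c \<in> {j. j < n \<and> S j = M}"
    unfolding c_def by (intro Max_in) auto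
  then have c: "c < n" "S c = M" by auto
  have c_last: "S j \<noteq> M" if "c < j" "j < n" for j
    using that Max_ge[of "{j. j < n \<and> S j = M}" j] unfolding c_def by fastforce
  have "S c < S (c + i)" if i: "i \<in> {1..n}" for i
  proof (cases "c + i < n")
    case True
    then show ?thesis using M_le c c_last[of "c + i"] i by fastforce
  next
    case False
    then have "S (c + i) = S (c + i - n) + d"
      using period[of "c + i - n"] by simp
    moreover have "M \<le> S (c + i - n)"
      using c(1) i by (intro M_le) auto
    ultimately show ?thesis using c(2) d by (metis add.right_neutral add_le_less_mono)
  qed
  then show ?thesis using c(1) by blast
qed

lemma cycle_lemma_two_starts:
  fixes S :: "nat \<Rightarrow> 'a::linordered_ab_group_add"
  assumes period: "\<And>t. S (t + n) = S t + d" and "c < c'" "c' < c + n"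
    and start_c: "\<forall>i\<in>{1..n}. S c < S (c + i)"
    and start_c': "\<forall>i\<in>{1..n}. S c' < S (c' + i)"
  shows "S c < S c'" and "S c' < S c + d"
proof -
  show "S c < S c'"
    using start_c[rule_format, of "c' - c"] assms(2,3) by fastforce
  have "S c' < S (c' + (c + n - c'))"
    using start_c'[rule_format, of "c + n - c'"] assms(2,3) by fastforce
  then show "S c' < S c + d"
    using assms(3) period[of c] by simp
qed

lemma mediant_ge_min:
  fixes a b p q :: real
  assumes "0 < p" "0 < q"
  shows "a / p \<le> (a + b) / (p + q) \<or> b / q \<le> (a + b) / (p + q)"
proof (rule ccontr)
  assume "\<not> ?thesis"
  then have "(a + b) / (p + q) * p < a" "(a + b) / (p + q) * q < b"
    using assms by (simp_all add: field_simps)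
  then have "(a + b) / (p + q) * (p + q) < a + b"
    by (simp add: distrib_left)
  then show False using assms by simp
qed

lemma funpow_mod_shift:
  fixes f :: "nat \<Rightarrow> nat" and d :: int
  assumes f_into: "\<And>i. i \<in> {1..n} \<Longrightarrow> f i \<in> {1..n}"
    and f_shift: "\<And>i. i \<in> {1..n} \<Longrightarrow> int (f i) - 1 = (int i - 1 + d) mod int n"
    and i: "i \<in> {1..n}"
  shows "(f ^^ m) i \<in> {1..n} \<and> int ((f ^^ m) i) - 1 = (int i - 1 + int m * d) mod int n"
proof (induction m)
  case 0
  then show ?case using i by auto
next
  case (Suc m)
  then have "int ((f ^^ Suc m) i) - 1 = ((int i - 1 + int m * d) mod int n + d) mod int n"
    using f_shift by simp
  also have "\<dots> = (int i - 1 + int (Suc m) * d) mod int n"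
    unfolding mod_add_left_eq by (simp add: algebra_simps)
  finally show ?case using Suc f_into by simp
qed

lemma tau_mod_shift:
  assumes "i \<in> {1..n}"
  shows "tau n i \<in> {1..n}" and "int (tau n i) - 1 = (int i - 1 + 1) mod int n"
  using assms by (auto simp: tau_def)

lemma tau_inv_mod_shift:
  assumes "i \<in> {1..n}"
  shows "tau_inv n i \<in> {1..n}"
    and "int (tau_inv n i) - 1 = (int i - 1 + - 1) mod int n"
  using assms by (auto simp: tau_inv_def zmod_minus1 of_nat_diff)

lemma tau_zpow_mod:
  assumes "i \<in> {1..n}"
  shows "int (tau_zpow n k i) - 1 = (int i - 1 + k) mod int n"
proof (cases "0 \<le> k")
  case True
  then show ?thesis
    using funpow_mod_shift[OF tau_mod_shift assms, of "nat k"] by (simp add: tau_zpow_def)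
next
  case False
  then show ?thesis
    using funpow_mod_shift[OF tau_inv_mod_shift assms, of "nat (- k)"] by (simp add: tau_zpow_def)
qed

lemma tau_act_Suc:
  assumes "j < n"
  shows "tau_act n k lam (Suc j) = lam ((nat ((- k) mod int n) + j) mod n + 1)"
proof -
  have "int (tau_zpow n (- k) (Suc j)) - 1 = (int j - k) mod int n"
    using tau_zpow_mod[of "Suc j" n "- k"] assms by simp
  also have "\<dots> = int ((nat ((- k) mod int n) + j) mod n)"
    using assms by (simp add: of_nat_mod mod_add_left_eq)
  finally have "tau_zpow n (- k) (Suc j) = (nat ((- k) mod int n) + j) mod n + 1"
    by linarith
  then show ?thesis by (simp add: tau_act_def)
qed

definition cyc_psum :: "nat \<Rightarrow> (nat \<Rightarrow> real) \<Rightarrow> nat \<Rightarrow> real" where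
  "cyc_psum n lam t = (\<Sum>j<t. lam (j mod n + 1))"

lemma cyc_psum_eq_sJ: "t \<le> n \<Longrightarrow> cyc_psum n lam t = sJ {1..t} lam"
  unfolding cyc_psum_def sJ_def by (simp add: sum.atLeast1_atMost_eq)

lemma cyc_psum_add_period: "cyc_psum n lam (t + n) = cyc_psum n lam t + sJ {1..n} lam"
proof (induction t)
  case 0
  then show ?case by (simp add: cyc_psum_eq_sJ sJ_def)
next
  case (Suc t)
  then show ?case by (simp add: cyc_psum_def)
qed

lemma cyc_psum_diff:
  assumes "c \<le> c'" "c' \<le> n"
  shows "cyc_psum n lam c' - cyc_psum n lam c = sJ {Suc c..c'} lam"
proof -
  have "{1..c'} = {1..c} \<union> {Suc c..c'}" using assms(1) by auto
  then have "sJ {1..c'} lam = sJ {1..c} lam + sJ {Suc c..c'} lam"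
    unfolding sJ_def by (simp add: sum.union_disjoint)
  then show ?thesis using assms by (simp add: cyc_psum_eq_sJ)
qed

lemma sum_tau_act:
  assumes "i \<le> n"
  shows "(\<Sum>j=1..i. tau_act n k lam j)
    = cyc_psum n lam (nat ((- k) mod int n) + i) - cyc_psum n lam (nat ((- k) mod int n))"
  using assms
proof (induction i)
  case 0
  then show ?case by simp
next
  case (Suc i)
  then show ?case by (simp add: tau_act_Suc cyc_psum_def)
qed

lemma pos_vec_tau_act_iff:
  "pos_vec n (tau_act n k lam) \<longleftrightarrow>
    (\<forall>i\<in>{1..n}.
      cyc_psum n lam (nat ((- k) mod int n)) < cyc_psum n lam (nat ((- k) mod int n) + i))"
  unfolding pos_vec_def
  by (intro ball_cong) (simp_all only: sum_tau_act atLeastAtMost_iff diff_gt_0_iff_gt)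

lemma has_pos_partition_iff:
  "has_pos_partition n lam \<longleftrightarrow> (\<exists>J\<subseteq>{1..n}. 0 < sJ J lam \<and> sJ J lam < sJ {1..n} lam)"
proof
  assume "has_pos_partition n lam"
  then obtain I1 I2 where I: "I1 \<union> I2 = {1..n}" "I1 \<inter> I2 = {}" "0 < sJ I1 lam" "0 < sJ I2 lam"
    unfolding has_pos_partition_def by blast
  moreover have "finite I1" "finite I2"
    using I(1) by (metis finite_Un finite_atLeastAtMost)+
  ultimately have "sJ {1..n} lam = sJ I1 lam + sJ I2 lam"
    unfolding sJ_def by (metis sum.union_disjoint)
  then show "\<exists>J\<subseteq>{1..n}. 0 < sJ J lam \<and> sJ J lam < sJ {1..n} lam"
    using I by (intro exI[of _ I1]) auto
next
  assume "\<exists>J\<subseteq>{1..n}. 0 < sJ J lam \<and> sJ J lam < sJ {1..n} lam"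
  then obtain J where J: "J \<subseteq> {1..n}" "0 < sJ J lam" "sJ J lam < sJ {1..n} lam"
    by blast
  then have "sJ ({1..n} - J) lam = sJ {1..n} lam - sJ J lam"
    unfolding sJ_def by (simp add: sum_diff)
  then show "has_pos_partition n lam"
    unfolding has_pos_partition_def using J by (intro exI[of _ J] exI[of _ "{1..n} - J"]) auto
qed

lemma has_pos_partition_if_two_starts:
  assumes "c < c'" "c' < n"
    and "\<forall>i\<in>{1..n}. cyc_psum n lam c < cyc_psum n lam (c + i)"
    and "\<forall>i\<in>{1..n}. cyc_psum n lam c' < cyc_psum n lam (c' + i)"
  shows "has_pos_partition n lam"
proof -
  have "cyc_psum n lam c < cyc_psum n lam c'" "cyc_psum n lam c' < cyc_psum n lam c + sJ {1..n} lam"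
    using cycle_lemma_two_starts[OF cyc_psum_add_period assms(1) _ assms(3,4)] assms(2) by auto
  moreover have "cyc_psum n lam c' - cyc_psum n lam c = sJ {Suc c..c'} lam"
    using assms by (intro cyc_psum_diff) auto
  ultimately show ?thesis
    unfolding has_pos_partition_iff using assms(2)
    by (intro exI[of _ "{Suc c..c'}"]) auto
qed

lemma pos_if_sJ_atLeastAtMost_pos: "0 < sJ {1..n} lam \<Longrightarrow> 0 < n"
  by (cases n) (auto simp: sJ_def)

lemma exists_pos_rotation:
  assumes "0 < sJ {1..n} lam"
  shows "\<exists>k. pos_vec n (tau_act n k lam)"
proof -
  obtain c where c: "c < n" "\<forall>i\<in>{1..n}. cyc_psum n lam c < cyc_psum n lam (c + i)"
    using cycle_lemma_exists[of n "cyc_psum n lam", OF pos_if_sJ_atLeastAtMost_pos[OF assms]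
      cyc_psum_add_period assms]
    by blast
  then have "pos_vec n (tau_act n (- int c) lam)"
    by (simp add: pos_vec_tau_act_iff)
  then show ?thesis ..
qed

lemma pos_rotation_unique_mod:
  assumes "0 < n" and "\<not> has_pos_partition n lam"
    and "pos_vec n (tau_act n k lam)" "pos_vec n (tau_act n k' lam)"
  shows "k mod int n = k' mod int n"
proof -
  define c c' where "c = nat ((- k) mod int n)" and "c' = nat ((- k') mod int n)"
  have "c < n" "c' < n" using \<open>0 < n\<close> by (simp_all add: c_def c'_def nat_less_iff)
  moreover have "\<forall>i\<in>{1..n}. cyc_psum n lam c < cyc_psum n lam (c + i)"
    and "\<forall>i\<in>{1..n}. cyc_psum n lam c' < cyc_psum n lam (c' + i)"
    using assms(3,4) by (simp_all add: pos_vec_tau_act_iff c_def c'_def)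
  ultimately have "c = c'"
    using has_pos_partition_if_two_starts assms(2) by (metis linorder_neqE_nat)
  then have "(- k) mod int n = (- k') mod int n"
    using \<open>0 < n\<close> by (simp add: c_def c'_def nat_eq_iff2)
  then show ?thesis by (metis minus_minus mod_minus_eq)
qed

lemma finite_subsets_image:
  fixes n :: nat
  shows "finite {f J | J. J \<subseteq> {1..n} \<and> P J}"
  by (rule finite_image_set, rule finite_subset[of _ "Pow {1..n}"]) auto

lemma card_pos_if_sJ_pos: "J \<subseteq> {1..n} \<Longrightarrow> 0 < sJ J lam \<Longrightarrow> 0 < card J"
  by (metis card_gt_0_iff finite_atLeastAtMost finite_subset less_irrefl sJ_def sum.empty)

lemma delta_le:
  assumes "J \<subseteq> {1..n}" "0 < sJ J lam"
  shows "delta n lam \<le> sJ J lam / card J"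
  unfolding delta_def using assms by (intro Min_le finite_subsets_image) auto

lemma delta_attained:
  assumes "0 < sJ {1..n} lam"
  shows "\<exists>J\<subseteq>{1..n}. 0 < sJ J lam \<and> sJ J lam / card J = delta n lam"
proof -
  have "delta n lam \<in> {sJ J lam / card J | J. J \<subseteq> {1..n} \<and> 0 < sJ J lam}"
    unfolding delta_def using assms by (intro Min_in finite_subsets_image) auto
  then show ?thesis by auto
qed

lemma delta_pos:
  assumes "0 < sJ {1..n} lam"
  shows "0 < delta n lam"
proof -
  obtain J where "J \<subseteq> {1..n}" "0 < sJ J lam" "sJ J lam / card J = delta n lam"
    using delta_attained[OF assms] by blast
  then show ?thesis using card_pos_if_sJ_pos[of J n lam] by (metis divide_pos_pos of_nat_0_less_iff)
qed

lemma Nlam_eq_n_iff_no_proper_minimizer: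
  assumes "0 < sJ {1..n} lam"
  shows "Nlam n lam = n \<longleftrightarrow> \<not> (\<exists>J\<subset>{1..n}. sJ J lam / card J = delta n lam)"
proof -
  define G where "G = {card J | J. J \<subseteq> {1..n} \<and> sJ J lam / card J = delta n lam}"
  have fin: "finite G" unfolding G_def by (rule finite_subsets_image)
  have N: "Nlam n lam = Min G" unfolding Nlam_def G_def ..
  show ?thesis
  proof
    assume "Nlam n lam = n"
    show "\<not> (\<exists>J\<subset>{1..n}. sJ J lam / card J = delta n lam)"
    proof
      assume "\<exists>J\<subset>{1..n}. sJ J lam / card J = delta n lam"
      then obtain J where "J \<subset> {1..n}" "card J \<in> G" unfolding G_def by auto
      then have "Min G \<le> card J" "card J < n"
        using Min_le[OF fin] psubset_card_mono[of "{1..n}" J] by auto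
      then show False using N \<open>Nlam n lam = n\<close> by simp
    qed
  next
    assume no_proper: "\<not> (\<exists>J\<subset>{1..n}. sJ J lam / card J = delta n lam)"
    have "G \<noteq> {}" unfolding G_def using delta_attained[OF assms] by auto
    then have "Min G \<in> G" using fin by (rule Min_in[rotated])
    then obtain J where "Min G = card J" "J \<subseteq> {1..n}" "sJ J lam / card J = delta n lam"
      unfolding G_def by auto
    with no_proper have "J = {1..n}" by blast
    then show "Nlam n lam = n" using N \<open>Min G = card J\<close> by simp
  qed
qed

lemma has_pos_partition_if_proper_minimizer:
  assumes total: "0 < sJ {1..n} lam"
    and J: "J \<subset> {1..n}" "sJ J lam / card J = delta n lam"
  shows "has_pos_partition n lam"
proof (rule ccontr)
  assume no_partition: "\<not> has_pos_partition n lam"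
  have "0 < sJ J lam / card J"
    using J(2) delta_pos[OF total] by simp
  then have J_pos: "0 < card J" "0 < sJ J lam"
    by (simp_all add: zero_less_divide_iff)
  have "card J < n"
    using J(1) psubset_card_mono[of "{1..n}" J] by simp
  have "sJ {1..n} lam \<le> sJ J lam"
    using no_partition J_pos J(1) unfolding has_pos_partition_iff by auto
  have "delta n lam \<le> sJ {1..n} lam / n"
    using delta_le[of "{1..n}" n lam] total by simp
  also have "\<dots> < sJ {1..n} lam / card J"
    using total J_pos \<open>card J < n\<close> by (intro divide_strict_left_mono) auto
  also have "\<dots> \<le> sJ J lam / card J"
    using \<open>sJ {1..n} lam \<le> sJ J lam\<close> by (simp add: divide_right_mono)
  finally show False using J(2) by simp
qed

lemma below_average_part_if_has_pos_partition:
  assumes "has_pos_partition n lam"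
  shows "\<exists>I\<subset>{1..n}. 0 < sJ I lam \<and> sJ I lam / card I \<le> sJ {1..n} lam / n"
proof -
  obtain J where J: "J \<subseteq> {1..n}" "0 < sJ J lam" "sJ J lam < sJ {1..n} lam"
    using assms unfolding has_pos_partition_iff by blast
  define K where "K = {1..n} - J"
  have sJ_K: "sJ K lam = sJ {1..n} lam - sJ J lam"
    unfolding K_def sJ_def using J(1) by (simp add: sum_diff)
  then have "0 < sJ K lam" using J(3) by simp
  have "K \<subseteq> {1..n}" unfolding K_def by blast
  have card_pos: "0 < card J" "0 < card K"
    using card_pos_if_sJ_pos J(1,2) \<open>K \<subseteq> {1..n}\<close> \<open>0 < sJ K lam\<close> by blast+
  have "card J \<le> n" using card_mono[OF _ J(1)] by simp
  moreover have "card K = n - card J"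
    unfolding K_def using J(1) by (simp add: card_Diff_subset finite_subset)
  ultimately have cards: "card J + card K = n" by simp
  have "J \<noteq> {}" "K \<noteq> {}" using card_pos by auto
  then have "J \<subset> {1..n}" "K \<subset> {1..n}"
    using J(1) unfolding K_def by blast+
  moreover have
    "sJ J lam / card J \<le> sJ {1..n} lam / n \<or> sJ K lam / card K \<le> sJ {1..n} lam / n"
    using mediant_ge_min[of "card J" "card K" "sJ J lam" "sJ K lam"] card_pos cards sJ_K
    by (simp flip: of_nat_add)
  ultimately show ?thesis using J(2) \<open>0 < sJ K lam\<close> by blast
qed

lemma proper_minimizer_if_has_pos_partition:
  assumes total: "0 < sJ {1..n} lam" and partition: "has_pos_partition n lam"
  shows "\<exists>J\<subset>{1..n}. sJ J lam / card J = delta n lam"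
proof (cases "delta n lam = sJ {1..n} lam / n")
  case True
  obtain I where I: "I \<subset> {1..n}" "0 < sJ I lam" "sJ I lam / card I \<le> sJ {1..n} lam / n"
    using below_average_part_if_has_pos_partition[OF partition] by blast
  then have "sJ I lam / card I = delta n lam"
    using delta_le[of I n lam] True by simp
  then show ?thesis using I(1) by blast
next
  case False
  obtain J where J: "J \<subseteq> {1..n}" "sJ J lam / card J = delta n lam"
    using delta_attained[OF total] by blast
  with False have "J \<noteq> {1..n}" by auto
  with J show ?thesis by blast
qed

lemma Nlam_eq_n_iff_no_pos_partition:
  assumes "0 < sJ {1..n} lam"
  shows "Nlam n lam = n \<longleftrightarrow> \<not> has_pos_partition n lam"
  using Nlam_eq_n_iff_no_proper_minimizer[OF assms] has_pos_partition_if_proper_minimizer[OF assms]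
    proper_minimizer_if_has_pos_partition[OF assms]
  by blast

theorem mainTheorem12:
  fixes n :: nat and lam :: "nat \<Rightarrow> real"
  assumes "sJ {1..n} lam > 0"
  shows "(Nlam n lam = n \<longleftrightarrow> \<not> has_pos_partition n lam)
    \<and> (\<exists>k::int. pos_vec n (tau_act n k lam))
    \<and> (\<not> has_pos_partition n lam \<longrightarrow>
        (\<forall>k k'::int. pos_vec n (tau_act n k lam) \<and> pos_vec n (tau_act n k' lam)
           \<longrightarrow> k mod int n = k' mod int n))"
  using Nlam_eq_n_iff_no_pos_partition[OF assms] exists_pos_rotation[OF assms]
    pos_rotation_unique_mod[OF pos_if_sJ_atLeastAtMost_pos[OF assms]]
  by blast

end
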